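(* Let $\mu\in L^\infty(\Omega_T\times]0,1[)$ be an entropy process solution, $C:=\|\mu\|_{L^\infty(\Omega_T\times]0,1[)}$, and $k\in\mathbb{R}$. Then for each choice of sign $\pm$ and every $\varphi\ge 0$ smooth on $\overline\Omega\times[0,T[$ with compact support in $\overline\Omega\times[0,T[$, $$\int_0^T\int_\Omega\int_0^1\eta_k^\pm(\mu)\partial_t\varphi+q_k^\pm(\mu)\partial_x\varphi\,d\alpha\,dx\,dt-\int_0^T\int_\Omega\int_0^1\mathrm{sign}^\pm(\mu-k)z'(x)b(\mu)\varphi\,d\alpha\,dx\,dt+\int_\Omega\eta_k^\pm(u_0(x))\varphi(x,0)dx+\mathrm{Lip}_{[-C,C]}(f)\int_0^T\eta_k^\pm(u_r(t))\varphi(x_r,t)+\eta_k^\pm(u_l(t))\varphi(x_l,t)\,dt\ge0.$$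
   Context: Let $x_l<x_r$, $\Omega=]x_l,x_r[$, $T>0$, $\Omega_T=\Omega\times]0,T[$. Data: $u_0\in L^\infty(\Omega)$, $u_l,u_r\in L^\infty(]0,T[)$, $f\in C^2(\mathbb{R})$, $z\in W^{1,\infty}(\Omega)$, $b\in C^1(\mathbb{R})$ with $b'\in L^\infty(\mathbb{R})$; with $D(s):=\int_0^s f'(\xi)/b(\xi)d\xi$ assume $D\in C^1$, $D(\mathbb{R})=\mathbb{R}$, $\inf D'>0$. $\mathrm{Lip}_{[-C,C]}(f):=\sup_{-C\le u,v\le C,u\ne v}|f(u)-f(v)|/|u-v|$. Boundary entropy pair: $\eta\in C^2(\mathbb{R})$ convex, $q\in C^1(\mathbb{R})$, $q'=\eta'f'$, some $w$ with $\eta(w)=\eta'(w)=q(w)=0$. Entropy process solution: $\mu\in L^\infty(\Omega_T\times]0,1[)$ such that with $C=\|\mu\|_\infty$, for all boundary entropy pairs and all $\varphi\ge0$ smooth with compact support in $\overline\Omega\times[0,T[$: $\int_0^T\int_\Omega\int_0^1\eta(\mu)\partial_t\varphi+q(\mu)\partial_x\varphi-\eta'(\mu)z'(x)b(\mu)\varphi\,d\alpha dxdt+\int_\Omega\eta(u_0)\varphi(\cdot,0)dx+\mathrm{Lip}_{[-C,C]}(f)\int_0^T\eta(u_r)\varphi(x_r,t)+\eta(u_l)\varphi(x_l,t)dt\ge0$. Semi-Kružkov pairs: $\mathrm{sign}^+(s)=1$ for $s>0$, $0$ for $s\le0$; $\mathrm{sign}^-(s)=0$ for $s\ge0$, $-1$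 for $s<0$; $\eta_k^\pm(s):=\mathrm{sign}^\pm(s-k)(s-k)$, $q_k^\pm(s):=\mathrm{sign}^\pm(s-k)(f(s)-f(k))$. *)

theory Defs
  imports "HOL-Analysis.Analysis"
begin

definition Linf_on :: "'a::euclidean_space set \<Rightarrow> ('a \<Rightarrow> real) \<Rightarrow> bool" where
  "Linf_on S g \<longleftrightarrow> set_borel_measurable lborel S g \<and>
     (\<exists>c. AE p in lborel. p \<in> S \<longrightarrow> \<bar>g p\<bar> \<le> c)"

definition Linf_norm :: "'a::euclidean_space set \<Rightarrow> ('a \<Rightarrow> real) \<Rightarrow> real" where
  "Linf_norm S g = Inf {c. 0 \<le> c \<and> (AE p in lborel. p \<in> S \<longrightarrow> \<bar>g p\<bar> \<le> c)}"

definition smooth1 :: "(real \<Rightarrow> real) \<Rightarrow> bool" where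
  "smooth1 \<psi> \<longleftrightarrow> (\<forall>n x. ((deriv ^^ n) \<psi>) differentiable (at x))"

definition dx :: "(real \<Rightarrow> real \<Rightarrow> real) \<Rightarrow> real \<Rightarrow> real \<Rightarrow> real" where
  "dx g = (\<lambda>x t. deriv (\<lambda>y. g y t) x)"

definition dt :: "(real \<Rightarrow> real \<Rightarrow> real) \<Rightarrow> real \<Rightarrow> real \<Rightarrow> real" where
  "dt g = (\<lambda>x t. deriv (\<lambda>s. g x s) t)"

fun pderivs :: "bool list \<Rightarrow> (real \<Rightarrow> real \<Rightarrow> real) \<Rightarrow> real \<Rightarrow> real \<Rightarrow> real" where
  "pderivs [] g = g"
| "pderivs (True # ds) g = dx (pderivs ds g)"
| "pderivs (False # ds) g = dt (pderivs ds g)"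

definition smooth2 :: "(real \<Rightarrow> real \<Rightarrow> real) \<Rightarrow> bool" where
  "smooth2 g \<longleftrightarrow> (\<forall>ds.
      continuous_on UNIV (\<lambda>p::real\<times>real. pderivs ds g (fst p) (snd p)) \<and>
      (\<forall>x t. (\<lambda>y. pderivs ds g y t) differentiable (at x) \<and>
             (\<lambda>s. pderivs ds g x s) differentiable (at t)))"

text \<open>Nonnegative smooth test functions on closure(Omega) x [0,T[ with compact support in
  closure(Omega) x [0,T[ (taken as restrictions of smooth functions on the plane).\<close>
definition test_fun :: "real \<Rightarrow> real \<Rightarrow> real \<Rightarrow> (real \<Rightarrow> real \<Rightarrow> real) \<Rightarrow> bool" where
  "test_fun xl xr T \<phi> \<longleftrightarrow> smooth2 \<phi> \<and>
     (\<forall>x\<in>{xl..xr}. \<forall>t\<in>{0..<T}. 0 \<le> \<phi> x t) \<and>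
     (\<exists>T'<T. \<forall>x\<in>{xl..xr}. \<forall>t\<in>{T'..<T}. \<phi> x t = 0)"

definition W1inf_with_deriv :: "real \<Rightarrow> real \<Rightarrow> (real \<Rightarrow> real) \<Rightarrow> (real \<Rightarrow> real) \<Rightarrow> bool" where
  "W1inf_with_deriv xl xr z dz \<longleftrightarrow> Linf_on {xl<..<xr} z \<and> Linf_on {xl<..<xr} dz \<and>
     (\<forall>\<psi>. smooth1 \<psi> \<and> compact (closure {x. \<psi> x \<noteq> 0}) \<and> closure {x. \<psi> x \<noteq> 0} \<subseteq> {xl<..<xr}
        \<longrightarrow> (LINT x:{xl<..<xr}|lborel. z x * deriv \<psi> x) = - (LINT x:{xl<..<xr}|lborel. dz x * \<psi> x))"

definition C1_fun :: "(real \<Rightarrow> real) \<Rightarrow> bool" where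
  "C1_fun g \<longleftrightarrow> (\<forall>x. g differentiable (at x)) \<and> continuous_on UNIV (deriv g)"

definition C2_fun :: "(real \<Rightarrow> real) \<Rightarrow> bool" where
  "C2_fun g \<longleftrightarrow> (\<forall>x. g differentiable (at x)) \<and> C1_fun (deriv g)"

definition D_fun :: "(real \<Rightarrow> real) \<Rightarrow> (real \<Rightarrow> real) \<Rightarrow> real \<Rightarrow> real" where
  "D_fun f b s = (LBINT \<xi>=0..ereal s. deriv f \<xi> / b \<xi>)"

text \<open>Supremum of difference quotients on [-C,C]; the empty supremum (C = 0) is taken as 0
  (all difference quotients are nonnegative, so adding 0 does not change a nonempty sup).\<close>
definition Lip_on :: "real \<Rightarrow> (real \<Rightarrow> real) \<Rightarrow> real" where
  "Lip_on C f = Sup (insert 0 {\<bar>f u - f v\<bar> / \<bar>u - v\<bar> | u v.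
       u \<in> {-C..C} \<and> v \<in> {-C..C} \<and> u \<noteq> v})"

definition boundary_entropy_pair :: "(real \<Rightarrow> real) \<Rightarrow> (real \<Rightarrow> real) \<Rightarrow> (real \<Rightarrow> real) \<Rightarrow> bool" where
  "boundary_entropy_pair f \<eta> q \<longleftrightarrow> C2_fun \<eta> \<and> convex_on UNIV \<eta> \<and> C1_fun q \<and>
     (\<forall>s. deriv q s = deriv \<eta> s * deriv f s) \<and>
     (\<exists>w. \<eta> w = 0 \<and> deriv \<eta> w = 0 \<and> q w = 0)"

definition entropy_process_solution ::
  "real \<Rightarrow> real \<Rightarrow> real \<Rightarrow> (real \<Rightarrow> real) \<Rightarrow> (real \<Rightarrow> real) \<Rightarrow> (real \<Rightarrow> real) \<Rightarrow>
   (real \<Rightarrow> real) \<Rightarrow> (real \<Rightarrow> real) \<Rightarrow> (real \<Rightarrow> real) \<Rightarrow>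
   (real \<Rightarrow> real \<Rightarrow> real \<Rightarrow> real) \<Rightarrow> bool" where
  "entropy_process_solution xl xr T u0 ul ur f dz b \<mu> \<longleftrightarrow>
     Linf_on ({xl<..<xr} \<times> {0<..<T} \<times> {0<..<1}) (\<lambda>p. \<mu> (fst p) (fst (snd p)) (snd (snd p))) \<and>
     (let C = Linf_norm ({xl<..<xr} \<times> {0<..<T} \<times> {0<..<1}) (\<lambda>p. \<mu> (fst p) (fst (snd p)) (snd (snd p)))
      in \<forall>\<eta> q \<phi>. boundary_entropy_pair f \<eta> q \<and> test_fun xl xr T \<phi> \<longrightarrow>
        (LINT t:{0<..<T}|lborel. LINT x:{xl<..<xr}|lborel. LINT \<alpha>:{0<..<1}|lborel.
            \<eta> (\<mu> x t \<alpha>) * dt \<phi> x t + q (\<mu> x t \<alpha>) * dx \<phi> x t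
            - deriv \<eta> (\<mu> x t \<alpha>) * dz x * b (\<mu> x t \<alpha>) * \<phi> x t)
        + (LINT x:{xl<..<xr}|lborel. \<eta> (u0 x) * \<phi> x 0)
        + Lip_on C f * (LINT t:{0<..<T}|lborel. \<eta> (ur t) * \<phi> xr t + \<eta> (ul t) * \<phi> xl t)
        \<ge> 0)"

definition sign_plus :: "real \<Rightarrow> real" where
  "sign_plus s = (if s > 0 then 1 else 0)"

definition sign_minus :: "real \<Rightarrow> real" where
  "sign_minus s = (if s \<ge> 0 then 0 else -1)"

text \<open>Sign choice: True stands for +, False for -.\<close>
definition sign_pm :: "bool \<Rightarrow> real \<Rightarrow> real" where
  "sign_pm pm = (if pm then sign_plus else sign_minus)"

definition eta_k :: "bool \<Rightarrow> real \<Rightarrow> real \<Rightarrow> real" where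
  "eta_k pm k s = sign_pm pm (s - k) * (s - k)"

definition q_k :: "(real \<Rightarrow> real) \<Rightarrow> bool \<Rightarrow> real \<Rightarrow> real \<Rightarrow> real" where
  "q_k f pm k s = sign_pm pm (s - k) * (f s - f k)"

end

theory Submission
  imports Defs
begin

text \<open>
  For a \<open>C\<^sup>2\<close> convex function \<open>ramp\<close> with \<open>ramp y = 0\<close> for \<open>y \<le> 0\<close> and
  \<open>ramp y = y - 1/2\<close> for \<open>y \<ge> 1\<close>, the functions
  \<open>\<eta>\<^sub>n(s) = ramp ((n+1)(\<plusminus>(s - k))) / (n+1)\<close> are \<open>C\<^sup>2\<close> convex entropies vanishing together
  with their derivative at \<open>k\<close>; with the fluxes \<open>q\<^sub>n(s) = \<integral>\<^sub>k\<^sup>s \<eta>\<^sub>n' f'\<close> they form boundary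
  entropy pairs, so the entropy process solution satisfies the entropy inequality for each of them.
  As \<open>n \<rightarrow> \<infinity>\<close>, \<open>\<eta>\<^sub>n \<rightarrow> \<eta>\<^sub>k\<^sup>\<plusminus>\<close>, \<open>\<eta>\<^sub>n' \<rightarrow> sign\<^sup>\<plusminus>(\<cdot> - k)\<close> and \<open>q\<^sub>n \<rightarrow> q\<^sub>k\<^sup>\<plusminus>\<close> pointwise,
  uniformly bounded on bounded sets. Since \<open>\<mu>\<close>, \<open>u\<^sub>0\<close>, \<open>u\<^sub>l\<close>, \<open>u\<^sub>r\<close> and \<open>z'\<close> are essentially
  bounded and the domain is bounded, dominated convergence passes to the limit in every term;
  the triple integral is treated as an integral over the product measure (Fubini).
\<close>

section \<open>A \<open>C\<^sup>2\<close> approximation of the positive part\<close>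

lemma DERIV_if_le:
  fixes g h g' h' :: "real \<Rightarrow> real"
  assumes g: "\<And>y. (g has_real_derivative g' y) (at y)"
    and h: "\<And>y. (h has_real_derivative h' y) (at y)"
    and glue: "g a = h a" "g' a = h' a"
  shows "((\<lambda>y. if y \<le> a then g y else h y) has_real_derivative (if x \<le> a then g' x else h' x)) (at x)"
proof -
  have "((\<lambda>y. if y \<in> {..a} then g y else h y) has_vector_derivative
      (if x \<in> {..a} then g' x else h' x)) (at x within {..a} \<union> {a<..})"
  proof (rule has_vector_derivative_If_within_closures)
    show "(g has_vector_derivative g' x) (at x within {..a} \<union> closure {..a} \<inter> closure {a<..})"
      using g has_real_derivative_iff_has_vector_derivative has_vector_derivative_at_within by blast
    show "(h has_vector_derivative h' x) (at x within {a<..} \<union> closure {..a} \<inter> closure {a<..})"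
      using h has_real_derivative_iff_has_vector_derivative has_vector_derivative_at_within by blast
  qed (use glue in auto)
  moreover have "{..a} \<union> {a<..} = (UNIV :: real set)" by auto
  ultimately show ?thesis
    by (simp add: has_real_derivative_iff_has_vector_derivative)
qed

text \<open>\<open>ramp (n * y) / n\<close> approximates \<open>max 0 y\<close> from below.\<close>

definition clamp01 :: "real \<Rightarrow> real" where
  "clamp01 y = max 0 (min 1 y)"

definition ramp :: "real \<Rightarrow> real" where
  "ramp y = clamp01 y ^ 3 - clamp01 y ^ 4 / 2 + max 0 (y - 1)"

definition ramp_deriv :: "real \<Rightarrow> real" where
  "ramp_deriv y = 3 * clamp01 y ^ 2 - 2 * clamp01 y ^ 3"

definition ramp_deriv2 :: "real \<Rightarrow> real" where
  "ramp_deriv2 y = 6 * max 0 (y - y ^ 2)"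

lemma ramp_eq: "ramp y = (if y \<le> 0 then 0 else if y \<le> 1 then y^3 - y^4/2 else y - 1/2)"
  by (auto simp: ramp_def clamp01_def)

lemma ramp_deriv_eq: "ramp_deriv y = (if y \<le> 0 then 0 else if y \<le> 1 then 3*y^2 - 2*y^3 else 1)"
  by (auto simp: ramp_deriv_def clamp01_def)

lemma ramp_deriv2_eq: "ramp_deriv2 y = (if y \<le> 0 then 0 else if y \<le> 1 then 6*y - 6*y^2 else 0)"
proof -
  have "y - y^2 = y * (1 - y)" by (simp add: power2_eq_square algebra_simps)
  then show ?thesis
    by (auto simp: ramp_deriv2_def max_def mult_nonneg_nonpos mult_nonpos_nonneg zero_le_mult_iff)
qed

lemma DERIV_ramp: "(ramp has_real_derivative ramp_deriv y) (at y)"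
proof -
  have "((\<lambda>y. if y \<le> 1 then y^3 - y^4/2 else y - 1/2) has_real_derivative
      (if x \<le> 1 then 3*x^2 - 2*x^3 else 1)) (at x)" for x
    by (rule DERIV_if_le) (auto intro!: derivative_eq_intros simp: power2_eq_square power3_eq_cube)
  then have "((\<lambda>y. if y \<le> 0 then 0 else if y \<le> 1 then y^3 - y^4/2 else y - 1/2) has_real_derivative
      (if y \<le> 0 then 0 else if y \<le> 1 then 3*y^2 - 2*y^3 else 1)) (at y)"
    by (rule DERIV_if_le[OF DERIV_const]) auto
  then show ?thesis by (simp add: ramp_eq[abs_def] ramp_deriv_eq)
qed

lemma DERIV_ramp_deriv: "(ramp_deriv has_real_derivative ramp_deriv2 y) (at y)"
proof -
  have "((\<lambda>y. if y \<le> 1 then 3*y^2 - 2*y^3 else 1) has_real_derivative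
      (if x \<le> 1 then 6*x - 6*x^2 else 0)) (at x)" for x
    by (rule DERIV_if_le) (auto intro!: derivative_eq_intros simp: power2_eq_square power3_eq_cube)
  then have "((\<lambda>y. if y \<le> 0 then 0 else if y \<le> 1 then 3*y^2 - 2*y^3 else 1) has_real_derivative
      (if y \<le> 0 then 0 else if y \<le> 1 then 6*y - 6*y^2 else 0)) (at y)"
    by (rule DERIV_if_le[OF DERIV_const]) auto
  then show ?thesis by (simp add: ramp_deriv_eq[abs_def] ramp_deriv2_eq)
qed

lemma continuous_on_ramp_deriv: "continuous_on UNIV ramp_deriv"
  unfolding ramp_deriv_def clamp01_def by (intro continuous_intros)

lemma continuous_on_ramp_deriv2: "continuous_on UNIV ramp_deriv2"
  unfolding ramp_deriv2_def by (intro continuous_intros)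

lemma ramp_deriv_bounds: "0 \<le> ramp_deriv y" "ramp_deriv y \<le> 1"
proof -
  define c where "c = clamp01 y"
  have c: "0 \<le> c" "c \<le> 1" by (auto simp: c_def clamp01_def)
  have "ramp_deriv y = c^2 * (3 - 2*c)"
    by (simp add: ramp_deriv_def c_def algebra_simps power2_eq_square power3_eq_cube)
  then show "0 \<le> ramp_deriv y" using c by simp
  have "1 - ramp_deriv y = (1 - c)^2 * (1 + 2*c)"
    by (simp add: ramp_deriv_def c_def algebra_simps power2_eq_square power3_eq_cube)
  then show "ramp_deriv y \<le> 1" using c by (smt (verit) mult_nonneg_nonneg zero_le_power2)
qed

lemma mono_ramp_deriv: "mono ramp_deriv"
  by (intro monoI DERIV_nonneg_imp_nondecreasing[of _ _ ramp_deriv])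
     (auto intro: DERIV_ramp_deriv simp: ramp_deriv2_def)

lemma ramp_bounds: "0 \<le> ramp y" "ramp y \<le> max 0 y"
proof -
  have "0 \<le> y^3 - y^4/2 \<and> y^3 - y^4/2 \<le> y" if "0 < y" "y \<le> 1"
  proof -
    have "y^4 \<le> y^3" "y^3 \<le> y" "0 \<le> y^4"
      using that power_decreasing[of 3 4 y] power_decreasing[of 1 3 y] by simp_all
    then show ?thesis by linarith
  qed
  then show "0 \<le> ramp y" "ramp y \<le> max 0 y" by (auto simp: ramp_eq)
qed

lemma ramp_eq_0: "y \<le> 0 \<Longrightarrow> ramp y = 0" and ramp_deriv_eq_0: "y \<le> 0 \<Longrightarrow> ramp_deriv y = 0"
  by (simp_all add: ramp_eq ramp_deriv_eq)

lemma ramp_eq_ge1: "1 \<le> y \<Longrightarrow> ramp y = y - 1/2" and ramp_deriv_eq_ge1: "1 \<le> y \<Longrightarrow> ramp_deriv y = 1"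
  by (cases "y = 1"; simp add: ramp_eq ramp_deriv_eq)+

section \<open>Smooth approximations of the semi-Kruzkov entropy pairs\<close>

definition pm_sign :: "bool \<Rightarrow> real" where
  "pm_sign pm = (if pm then 1 else -1)"

lemma pm_sign_mult_self_left [simp]: "pm_sign pm * (pm_sign pm * x) = x"
  and abs_pm_sign [simp]: "\<bar>pm_sign pm\<bar> = 1"
  by (simp_all add: pm_sign_def)

lemma eta_k_eq_max: "eta_k pm k s = max 0 (pm_sign pm * (s - k))"
  by (auto simp: eta_k_def sign_pm_def sign_plus_def sign_minus_def pm_sign_def)

lemma sign_pm_eq: "sign_pm pm (s - k) = (if 0 < pm_sign pm * (s - k) then pm_sign pm else 0)"
  by (auto simp: sign_pm_def sign_plus_def sign_minus_def pm_sign_def)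

definition eta_approx :: "bool \<Rightarrow> real \<Rightarrow> nat \<Rightarrow> real \<Rightarrow> real" where
  "eta_approx pm k n s = ramp (real (Suc n) * (pm_sign pm * (s - k))) / real (Suc n)"

definition eta_approx_deriv :: "bool \<Rightarrow> real \<Rightarrow> nat \<Rightarrow> real \<Rightarrow> real" where
  "eta_approx_deriv pm k n s = pm_sign pm * ramp_deriv (real (Suc n) * (pm_sign pm * (s - k)))"

definition q_approx :: "(real \<Rightarrow> real) \<Rightarrow> bool \<Rightarrow> real \<Rightarrow> nat \<Rightarrow> real \<Rightarrow> real" where
  "q_approx f pm k n s = (LBINT r=ereal k..ereal s. eta_approx_deriv pm k n r * deriv f r)"

lemma DERIV_eta_approx: "(eta_approx pm k n has_real_derivative eta_approx_deriv pm k n s) (at s)"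
proof -
  have "((\<lambda>s. real (Suc n) * (pm_sign pm * (s - k))) has_real_derivative real (Suc n) * pm_sign pm) (at s)"
    by (auto intro!: derivative_eq_intros)
  from DERIV_cdivide[OF DERIV_chain2[OF DERIV_ramp this], of "real (Suc n)"] show ?thesis
    unfolding eta_approx_def[abs_def] eta_approx_deriv_def by (simp add: ac_simps del: of_nat_Suc)
qed

lemma DERIV_eta_approx_deriv:
  "(eta_approx_deriv pm k n has_real_derivative
     real (Suc n) * ramp_deriv2 (real (Suc n) * (pm_sign pm * (s - k)))) (at s)"
proof -
  have "((\<lambda>s. real (Suc n) * (pm_sign pm * (s - k))) has_real_derivative real (Suc n) * pm_sign pm) (at s)"
    by (auto intro!: derivative_eq_intros)
  from DERIV_cmult[OF DERIV_chain2[OF DERIV_ramp_deriv this], of "pm_sign pm"] show ?thesis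
    unfolding eta_approx_deriv_def[abs_def] by (simp add: ac_simps del: of_nat_Suc)
qed

lemma continuous_on_eta_approx_deriv: "continuous_on UNIV (eta_approx_deriv pm k n)"
  unfolding eta_approx_deriv_def[abs_def]
  by (intro continuous_intros continuous_on_compose2[OF continuous_on_ramp_deriv]) auto

lemma abs_eta_approx_deriv_le: "\<bar>eta_approx_deriv pm k n s\<bar> \<le> 1"
  using ramp_deriv_bounds by (simp add: eta_approx_deriv_def abs_mult)

lemma abs_eta_approx_le: "\<bar>eta_approx pm k n s\<bar> \<le> \<bar>s - k\<bar>"
proof -
  define y where "y = real (Suc n) * (pm_sign pm * (s - k))"
  have "\<bar>ramp y\<bar> \<le> \<bar>y\<bar>" using ramp_bounds[of y] by linarith
  moreover have "\<bar>y\<bar> = real (Suc n) * \<bar>s - k\<bar>" by (simp add: y_def abs_mult)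
  ultimately show ?thesis
    by (simp add: eta_approx_def y_def[symmetric] divide_le_eq mult.commute del: of_nat_Suc)
qed

lemma eta_approx_eq_0: "pm_sign pm * (s - k) \<le> 0 \<Longrightarrow> eta_approx pm k n s = 0"
  and eta_approx_deriv_eq_0: "pm_sign pm * (s - k) \<le> 0 \<Longrightarrow> eta_approx_deriv pm k n s = 0"
  by (simp_all add: eta_approx_def eta_approx_deriv_def ramp_eq_0 ramp_deriv_eq_0 mult_nonneg_nonpos)

lemma eta_approx_eq_far:
  "1 \<le> real (Suc n) * (pm_sign pm * (s - k)) \<Longrightarrow>
     eta_approx pm k n s = pm_sign pm * (s - k) - inverse (real (Suc n)) / 2"
  and eta_approx_deriv_eq_far:
  "1 \<le> real (Suc n) * (pm_sign pm * (s - k)) \<Longrightarrow> eta_approx_deriv pm k n s = pm_sign pm"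
  by (simp_all add: eta_approx_def eta_approx_deriv_def ramp_eq_ge1 ramp_deriv_eq_ge1 field_simps
      del: of_nat_Suc)

lemma C2_fun_imp_C1_fun: "C2_fun f \<Longrightarrow> C1_fun f"
  unfolding C2_fun_def C1_fun_def
  by (auto intro: differentiable_at_imp_differentiable_on differentiable_imp_continuous_on)

lemma DERIV_q_approx:
  assumes "C1_fun f"
  shows "(q_approx f pm k n has_real_derivative eta_approx_deriv pm k n s * deriv f s) (at s)"
proof -
  let ?g = "\<lambda>r. eta_approx_deriv pm k n r * deriv f r"
  have "continuous_on UNIV ?g"
    using assms by (intro continuous_intros continuous_on_eta_approx_deriv) (simp add: C1_fun_def)
  then have "((\<lambda>u. LBINT r=k..u. ?g r) has_vector_derivative ?g s) (at s within {min k s - 1..max k s + 1})"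
    by (intro interval_integral_FTC2) (auto intro: continuous_on_subset)
  moreover have "at s within {min k s - 1..max k s + 1} = at s"
    by (intro at_within_interior) auto
  ultimately have "((\<lambda>u. LBINT r=k..u. ?g r) has_vector_derivative ?g s) (at s)"
    by simp
  then show ?thesis
    unfolding q_approx_def[abs_def] by (simp add: has_real_derivative_iff_has_vector_derivative)
qed

lemma q_approx_diff_eq:
  assumes f: "C1_fun f" and c: "\<And>r. r \<in> closed_segment a b \<Longrightarrow> eta_approx_deriv pm k n r = c"
  shows "q_approx f pm k n b - q_approx f pm k n a = c * (f b - f a)"
proof -
  let ?D = "\<lambda>r. q_approx f pm k n r - c * f r"
  have "norm (?D b - ?D a) \<le> 0 * norm (b - a)"
  proof (rule field_differentiable_bound[OF convex_closed_segment])
    fix r assume r: "r \<in> closed_segment a b"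
    have "(f has_real_derivative deriv f r) (at r)"
      using f by (simp add: C1_fun_def DERIV_deriv_iff_real_differentiable)
    then have "(?D has_real_derivative eta_approx_deriv pm k n r * deriv f r - c * deriv f r) (at r)"
      by (intro DERIV_diff DERIV_q_approx[OF f] DERIV_cmult)
    then show "(?D has_field_derivative eta_approx_deriv pm k n r * deriv f r - c * deriv f r)
        (at r within closed_segment a b)"
      by (rule has_field_derivative_at_within)
    show "norm (eta_approx_deriv pm k n r * deriv f r - c * deriv f r) \<le> 0"
      using c[OF r] by simp
  qed auto
  then show ?thesis by (simp add: algebra_simps)
qed

lemma abs_q_approx_le:
  assumes f: "C1_fun f" and M: "\<And>r. r \<in> closed_segment k s \<Longrightarrow> \<bar>deriv f r\<bar> \<le> M"
  shows "\<bar>q_approx f pm k n s\<bar> \<le> M * \<bar>s - k\<bar>"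
proof -
  have "norm (q_approx f pm k n s - q_approx f pm k n k) \<le> M * norm (s - k)"
  proof (rule field_differentiable_bound[OF convex_closed_segment])
    fix r assume r: "r \<in> closed_segment k s"
    show "(q_approx f pm k n has_field_derivative eta_approx_deriv pm k n r * deriv f r)
        (at r within closed_segment k s)"
      by (rule has_field_derivative_at_within[OF DERIV_q_approx[OF f]])
    show "norm (eta_approx_deriv pm k n r * deriv f r) \<le> M"
      using mult_mono[OF abs_eta_approx_deriv_le M[OF r]] by (simp add: abs_mult)
  qed auto
  then show ?thesis by (simp add: q_approx_def)
qed

lemma deriv_eta_approx: "deriv (eta_approx pm k n) = eta_approx_deriv pm k n"
  using DERIV_eta_approx DERIV_imp_deriv by blast

lemma boundary_entropy_pair_approx:
  assumes "C1_fun f"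
  shows "boundary_entropy_pair f (eta_approx pm k n) (q_approx f pm k n)"
proof -
  have deriv_q: "deriv (q_approx f pm k n) = (\<lambda>s. eta_approx_deriv pm k n s * deriv f s)"
    using DERIV_q_approx[OF assms] DERIV_imp_deriv by blast
  have "C2_fun (eta_approx pm k n)"
    unfolding C2_fun_def C1_fun_def deriv_eta_approx
  proof (intro conjI allI)
    show "eta_approx pm k n differentiable at x" "eta_approx_deriv pm k n differentiable at x" for x
      using DERIV_eta_approx DERIV_eta_approx_deriv real_differentiable_def by blast+
    have "deriv (eta_approx_deriv pm k n) =
        (\<lambda>s. real (Suc n) * ramp_deriv2 (real (Suc n) * (pm_sign pm * (s - k))))"
      using DERIV_eta_approx_deriv DERIV_imp_deriv by blast
    then show "continuous_on UNIV (deriv (eta_approx_deriv pm k n))"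
      by (auto intro!: continuous_intros continuous_on_compose2[OF continuous_on_ramp_deriv2])
  qed
  moreover have "convex_on UNIV (eta_approx pm k n)"
  proof (rule convex_on_realI[OF _ DERIV_eta_approx])
    show "eta_approx_deriv pm k n x \<le> eta_approx_deriv pm k n y" if "x \<le> y" for x y
      using that monoD[OF mono_ramp_deriv] by (auto simp: eta_approx_deriv_def pm_sign_def)
  qed auto
  moreover have "C1_fun (q_approx f pm k n)"
    unfolding C1_fun_def deriv_q
  proof
    show "\<forall>x. q_approx f pm k n differentiable at x"
      using DERIV_q_approx[OF assms] real_differentiable_def by blast
    show "continuous_on UNIV (\<lambda>s. eta_approx_deriv pm k n s * deriv f s)"
      using assms by (intro continuous_intros continuous_on_eta_approx_deriv) (simp add: C1_fun_def)
  qed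
  ultimately show ?thesis
    unfolding boundary_entropy_pair_def deriv_eta_approx deriv_q
    by (auto intro!: exI[of _ k] simp: eta_approx_eq_0 eta_approx_deriv_eq_0 q_approx_def)
qed

lemma eventually_one_le_Suc_mult:
  assumes "0 < y"
  shows "eventually (\<lambda>n. 1 \<le> real (Suc n) * y) sequentially"
proof -
  obtain N :: nat where N: "1 / y < real N" using reals_Archimedean2 by blast
  have "1 \<le> real (Suc n) * y" if "N \<le> n" for n
  proof -
    have "1 < y * real N" using N assms by (simp add: field_simps)
    also have "\<dots> \<le> y * real (Suc n)" using that assms by (intro mult_left_mono) auto
    finally show ?thesis by (simp add: mult.commute)
  qed
  then show ?thesis by (rule eventually_sequentiallyI)
qed

lemma pm_sign_closed_segment_bounds:
  assumes "r \<in> closed_segment a b"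
  shows "min (pm_sign pm * (a - k)) (pm_sign pm * (b - k)) \<le> pm_sign pm * (r - k)"
    and "pm_sign pm * (r - k) \<le> max (pm_sign pm * (a - k)) (pm_sign pm * (b - k))"
  using assms by (auto simp: closed_segment_eq_real_ivl pm_sign_def split: if_splits)

lemma eta_approx_tendsto: "(\<lambda>n. eta_approx pm k n s) \<longlonglongrightarrow> eta_k pm k s"
proof (cases "0 < pm_sign pm * (s - k)")
  case True
  then have "eventually (\<lambda>n. pm_sign pm * (s - k) - inverse (real (Suc n)) / 2 = eta_approx pm k n s)
      sequentially"
    by (auto elim: eventually_mono[OF eventually_one_le_Suc_mult] simp: eta_approx_eq_far)
  moreover have "(\<lambda>n. pm_sign pm * (s - k) - inverse (real (Suc n)) / 2) \<longlonglongrightarrow> pm_sign pm * (s - k)"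
    using tendsto_diff[OF tendsto_const tendsto_divide_zero[OF LIMSEQ_inverse_real_of_nat]] by simp
  ultimately show ?thesis
    using True by (simp add: eta_k_eq_max Lim_transform_eventually)
qed (simp add: eta_approx_eq_0 eta_k_eq_max)

lemma eta_approx_deriv_tendsto: "(\<lambda>n. eta_approx_deriv pm k n s) \<longlonglongrightarrow> sign_pm pm (s - k)"
proof (cases "0 < pm_sign pm * (s - k)")
  case True
  then have "eventually (\<lambda>n. pm_sign pm = eta_approx_deriv pm k n s) sequentially"
    by (auto elim: eventually_mono[OF eventually_one_le_Suc_mult] simp: eta_approx_deriv_eq_far)
  then show ?thesis
    using True by (simp add: sign_pm_eq Lim_transform_eventually[OF tendsto_const])
qed (simp add: eta_approx_deriv_eq_0 sign_pm_eq)

lemma q_approx_near_k_tendsto: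
  assumes f: "C1_fun f"
  shows "(\<lambda>n. q_approx f pm k n (k + pm_sign pm * inverse (real (Suc n)))) \<longlonglongrightarrow> 0"
proof -
  define l where "l n = k + pm_sign pm * inverse (real (Suc n))" for n
  have l_k: "\<bar>l n - k\<bar> = inverse (real (Suc n))" for n
    by (simp add: l_def abs_mult)
  have "bounded (deriv f ` {k - 1..k + 1})"
    using f by (intro compact_imp_bounded compact_continuous_image)
      (auto simp: C1_fun_def intro: continuous_on_subset)
  then obtain M where M: "\<And>r. r \<in> {k - 1..k + 1} \<Longrightarrow> \<bar>deriv f r\<bar> \<le> M"
    unfolding bounded_iff by (auto simp del: atLeastAtMost_iff)
  have "\<bar>q_approx f pm k n (l n)\<bar> \<le> M * inverse (real (Suc n))" for n
  proof -
    have "\<bar>l n - k\<bar> \<le> 1"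
      unfolding l_k by (simp add: inverse_le_1_iff del: of_nat_Suc)
    then have "closed_segment k (l n) \<subseteq> {k - 1..k + 1}"
      by (auto simp: closed_segment_eq_real_ivl abs_le_iff split: if_splits)
    then have "\<bar>q_approx f pm k n (l n)\<bar> \<le> M * \<bar>l n - k\<bar>"
      using M by (intro abs_q_approx_le[OF f]) auto
    then show ?thesis
      unfolding l_k .
  qed
  then show ?thesis
    unfolding l_def
    by (intro Lim_null_comparison[OF _ tendsto_mult_right_zero[OF LIMSEQ_inverse_real_of_nat, of M]])
      (simp del: of_nat_Suc)
qed

lemma q_approx_tendsto:
  assumes f: "C1_fun f"
  shows "(\<lambda>n. q_approx f pm k n s) \<longlonglongrightarrow> q_k f pm k s"
proof (cases "0 < pm_sign pm * (s - k)")
  case False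
  have "q_approx f pm k n s - q_approx f pm k n k = 0 * (f s - f k)" for n
  proof (rule q_approx_diff_eq[OF f])
    fix r assume "r \<in> closed_segment k s"
    from pm_sign_closed_segment_bounds(2)[OF this, of pm k] False
    show "eta_approx_deriv pm k n r = 0" by (simp add: eta_approx_deriv_eq_0)
  qed
  then show ?thesis
    using False by (simp add: q_approx_def q_k_def sign_pm_eq)
next
  case True
  \<comment> \<open>Between \<open>l n\<close> and \<open>s\<close> the derivative of \<open>eta_approx\<close> is \<open>pm_sign pm\<close>, so \<open>q_approx\<close> changes there like \<open>pm_sign pm * f\<close>.\<close>
  define l where "l n = k + pm_sign pm * inverse (real (Suc n))" for n
  have "l \<longlonglongrightarrow> k + pm_sign pm * 0"
    unfolding l_def by (intro tendsto_intros LIMSEQ_inverse_real_of_nat)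
  then have f_l: "(\<lambda>n. f (l n)) \<longlonglongrightarrow> f k"
    using f by (auto simp: C1_fun_def intro: isCont_tendsto_compose differentiable_imp_continuous_within)
  have "eventually (\<lambda>n. q_approx f pm k n (l n) + pm_sign pm * (f s - f (l n)) = q_approx f pm k n s)
      sequentially"
    using eventually_one_le_Suc_mult[OF True]
  proof eventually_elim
    case (elim n)
    have far: "eta_approx_deriv pm k n r = pm_sign pm" if "r \<in> closed_segment (l n) s" for r
    proof (rule eta_approx_deriv_eq_far)
      have "inverse (real (Suc n)) \<le> pm_sign pm * (s - k)"
        using elim by (simp add: field_simps del: of_nat_Suc)
      then have "inverse (real (Suc n)) \<le> pm_sign pm * (r - k)"
        using pm_sign_closed_segment_bounds(1)[OF that, of pm k] by (simp add: l_def)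
      from mult_left_mono[OF this, of "real (Suc n)"]
      show "1 \<le> real (Suc n) * (pm_sign pm * (r - k))" by simp
    qed
    from q_approx_diff_eq[OF f, where a="l n" and b=s, OF far] show ?case by simp
  qed
  moreover have "(\<lambda>n. q_approx f pm k n (l n) + pm_sign pm * (f s - f (l n)))
      \<longlonglongrightarrow> 0 + pm_sign pm * (f s - f k)"
    unfolding l_def by (intro tendsto_intros q_approx_near_k_tendsto[OF f] f_l[unfolded l_def])
  ultimately show ?thesis
    using True by (simp add: q_k_def sign_pm_eq Lim_transform_eventually)
qed

section \<open>Essentially bounded functions and bounded convergence\<close>

lemma Linf_onE:
  assumes "Linf_on S g"
  obtains c where "set_borel_measurable lborel S g" "AE p in lborel. p \<in> S \<longrightarrow> \<bar>g p\<bar> \<le> c"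
  using assms unfolding Linf_on_def by blast

lemma set_integrable_Linf_on:
  assumes g: "Linf_on S g" and S: "S \<in> sets lborel" "emeasure lborel S < \<infinity>"
  shows "set_integrable lborel S g"
proof -
  obtain c where g_meas: "set_borel_measurable lborel S g"
    and g_bound: "AE p in lborel. p \<in> S \<longrightarrow> \<bar>g p\<bar> \<le> c"
    using g by (rule Linf_onE)
  have "set_integrable lborel S (\<lambda>_. c)"
    using S by (simp add: set_integrable_def)
  then show ?thesis
    by (rule set_integrable_bound[OF _ g_meas]) (use g_bound in \<open>eventually_elim, auto\<close>)
qed

lemma Linf_on_mult:
  assumes "Linf_on S f" "Linf_on S g"
  shows "Linf_on S (\<lambda>p. f p * g p)"
proof -
  obtain cf cg where f: "set_borel_measurable lborel S f" "AE p in lborel. p \<in> S \<longrightarrow> \<bar>f p\<bar> \<le> cf"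
    and g: "set_borel_measurable lborel S g" "AE p in lborel. p \<in> S \<longrightarrow> \<bar>g p\<bar> \<le> cg"
    using assms unfolding Linf_on_def by blast
  have "(\<lambda>p. indicator S p *\<^sub>R (f p * g p)) = (\<lambda>p. (indicator S p *\<^sub>R f p) * (indicator S p *\<^sub>R g p))"
    by (auto simp: indicator_def)
  then have "set_borel_measurable lborel S (\<lambda>p. f p * g p)"
    using f(1) g(1) by (simp add: set_borel_measurable_def)
  moreover have "AE p in lborel. p \<in> S \<longrightarrow> \<bar>f p * g p\<bar> \<le> cf * cg"
    using f(2) g(2) by eventually_elim (auto simp: abs_mult intro!: mult_mono)
  ultimately show ?thesis unfolding Linf_on_def by blast
qed

lemma Linf_on_add:
  assumes "Linf_on S f" "Linf_on S g"
  shows "Linf_on S (\<lambda>p. f p + g p)"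
proof -
  obtain cf cg where f: "set_borel_measurable lborel S f" "AE p in lborel. p \<in> S \<longrightarrow> \<bar>f p\<bar> \<le> cf"
    and g: "set_borel_measurable lborel S g" "AE p in lborel. p \<in> S \<longrightarrow> \<bar>g p\<bar> \<le> cg"
    using assms unfolding Linf_on_def by blast
  have "set_borel_measurable lborel S (\<lambda>p. f p + g p)"
    using borel_measurable_add[OF f(1)[unfolded set_borel_measurable_def] g(1)[unfolded set_borel_measurable_def]]
    by (simp add: set_borel_measurable_def distrib_left)
  moreover have "AE p in lborel. p \<in> S \<longrightarrow> \<bar>f p + g p\<bar> \<le> cf + cg"
    using f(2) g(2) by eventually_elim auto
  ultimately show ?thesis unfolding Linf_on_def by blast
qed

lemma Linf_on_diff:
  assumes "Linf_on S f" "Linf_on S g"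
  shows "Linf_on S (\<lambda>p. f p - g p)"
proof -
  obtain cf cg where f: "set_borel_measurable lborel S f" "AE p in lborel. p \<in> S \<longrightarrow> \<bar>f p\<bar> \<le> cf"
    and g: "set_borel_measurable lborel S g" "AE p in lborel. p \<in> S \<longrightarrow> \<bar>g p\<bar> \<le> cg"
    using assms unfolding Linf_on_def by blast
  have "set_borel_measurable lborel S (\<lambda>p. f p - g p)"
    using borel_measurable_diff[OF f(1)[unfolded set_borel_measurable_def] g(1)[unfolded set_borel_measurable_def]]
    by (simp add: set_borel_measurable_def right_diff_distrib)
  moreover have "AE p in lborel. p \<in> S \<longrightarrow> \<bar>f p - g p\<bar> \<le> cf + cg"
    using f(2) g(2) by eventually_elim auto
  ultimately show ?thesis unfolding Linf_on_def by blast
qed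

lemma Linf_on_compose:
  fixes g :: "real \<Rightarrow> real"
  assumes u: "Linf_on S u" and S: "S \<in> sets lborel"
    and g: "g \<in> borel_measurable borel" "\<And>c. bounded (g ` {-c..c})"
  shows "Linf_on S (\<lambda>p. g (u p))"
proof -
  obtain c where u_meas: "set_borel_measurable lborel S u"
    and u_bound: "AE p in lborel. p \<in> S \<longrightarrow> \<bar>u p\<bar> \<le> c"
    using u by (rule Linf_onE)
  obtain K where K: "\<And>v. v \<in> {-c..c} \<Longrightarrow> \<bar>g v\<bar> \<le> K"
    using g(2)[of c] unfolding bounded_iff by (auto simp del: atLeastAtMost_iff)
  have u_K: "\<bar>g (u p)\<bar> \<le> K" if "\<bar>u p\<bar> \<le> c" for p
    using that by (intro K) (simp add: abs_le_iff)
  have "(\<lambda>p. indicator S p *\<^sub>R g (u p)) = (\<lambda>p. indicator S p *\<^sub>R g (indicator S p *\<^sub>R u p))"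
    by (auto simp: indicator_def)
  moreover have "(\<lambda>p. g (indicator S p *\<^sub>R u p)) \<in> borel_measurable lborel"
    using measurable_compose[OF u_meas[unfolded set_borel_measurable_def] g(1)] by simp
  ultimately have "set_borel_measurable lborel S (\<lambda>p. g (u p))"
    using S by (simp add: set_borel_measurable_def)
  moreover have "AE p in lborel. p \<in> S \<longrightarrow> \<bar>g (u p)\<bar> \<le> K"
    using u_bound by eventually_elim (auto intro: u_K)
  ultimately show ?thesis unfolding Linf_on_def by blast
qed

lemma Linf_on_continuous:
  fixes g :: "'a::euclidean_space \<Rightarrow> real"
  assumes g: "continuous_on UNIV g" and S: "bounded S" "S \<in> sets lborel"
  shows "Linf_on S g"
proof -
  have "bounded (g ` closure S)"
    using g S by (intro compact_imp_bounded compact_continuous_image)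
      (auto intro: continuous_on_subset simp: compact_closure)
  then obtain K where "\<And>p. p \<in> S \<Longrightarrow> \<bar>g p\<bar> \<le> K"
    unfolding bounded_iff using closure_subset by fastforce
  moreover have "set_borel_measurable lborel S g"
    using borel_measurable_continuous_onI[OF g] S by (simp add: set_borel_measurable_def)
  ultimately show ?thesis unfolding Linf_on_def by (blast intro: AE_I2)
qed

lemma Linf_on_Times_fst:
  fixes g :: "'a::euclidean_space \<Rightarrow> real" and B :: "'b::euclidean_space set"
  assumes g: "Linf_on A g" and B: "B \<in> sets lborel"
  shows "Linf_on (A \<times> B) (\<lambda>p. g (fst p))"
proof -
  obtain c where g_meas: "set_borel_measurable lborel A g"
    and g_bound: "AE x in lborel. x \<in> A \<longrightarrow> \<bar>g x\<bar> \<le> c"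
    using g by (rule Linf_onE)
  have "(\<lambda>p. indicator (A \<times> B) p *\<^sub>R g (fst p)) =
      (\<lambda>p. indicator B (snd p) *\<^sub>R (indicator A (fst p) *\<^sub>R g (fst p)))"
    by (auto simp: indicator_def)
  moreover have "(\<lambda>p. indicator B (snd p) *\<^sub>R (indicator A (fst p) *\<^sub>R g (fst p)))
      \<in> borel_measurable (lborel \<Otimes>\<^sub>M lborel)"
    using g_meas B unfolding set_borel_measurable_def by measurable
  ultimately have "set_borel_measurable lborel (A \<times> B) (\<lambda>p. g (fst p))"
    by (simp add: set_borel_measurable_def lborel_prod)
  moreover obtain N where N: "{x \<in> space lborel. \<not> (x \<in> A \<longrightarrow> \<bar>g x\<bar> \<le> c)} \<subseteq> N"
    "emeasure lborel N = 0" "N \<in> sets lborel"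
    using AE_E[OF g_bound] by blast
  have "AE p in lborel. p \<in> A \<times> B \<longrightarrow> \<bar>g (fst p)\<bar> \<le> c"
  proof (rule AE_I)
    show "{p \<in> space lborel. \<not> (p \<in> A \<times> B \<longrightarrow> \<bar>g (fst p)\<bar> \<le> c)} \<subseteq> N \<times> (UNIV :: 'b set)"
      using N(1) by auto
    show "emeasure lborel (N \<times> (UNIV :: 'b set)) = 0"
      using N(2,3) by (simp add: lborel_prod[symmetric] lborel.emeasure_pair_measure_Times)
    show "N \<times> (UNIV :: 'b set) \<in> sets lborel"
      using N(3) by (simp add: lborel_prod[symmetric])
  qed
  ultimately show ?thesis unfolding Linf_on_def by blast
qed

lemma bounded_limit_image:
  fixes E :: "nat \<Rightarrow> real \<Rightarrow> real"
  assumes "bounded (\<Union>n. E n ` A)" and "\<And>v. (\<lambda>n. E n v) \<longlonglongrightarrow> g v"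
  shows "bounded (g ` A)"
proof (rule bounded_subset[OF bounded_closure[OF assms(1)]])
  show "g ` A \<subseteq> closure (\<Union>n. E n ` A)"
  proof (rule image_subsetI)
    fix v assume "v \<in> A"
    then show "g v \<in> closure (\<Union>n. E n ` A)"
      unfolding closure_sequential using assms(2) by (intro exI[of _ "\<lambda>n. E n v"]) auto
  qed
qed

lemma set_integral_bounded_convergence:
  fixes F :: "nat \<Rightarrow> 'a::euclidean_space \<Rightarrow> real"
  assumes S: "S \<in> sets lborel" "emeasure lborel S < \<infinity>"
    and F: "\<And>n. set_borel_measurable lborel S (F n)"
    and lim: "\<And>p. p \<in> S \<Longrightarrow> (\<lambda>n. F n p) \<longlonglongrightarrow> G p"
    and bound: "\<And>n. AE p in lborel. p \<in> S \<longrightarrow> \<bar>F n p\<bar> \<le> K"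
  shows "(\<lambda>n. LINT p:S|lborel. F n p) \<longlonglongrightarrow> (LINT p:S|lborel. G p)"
  unfolding set_lebesgue_integral_def
proof (rule integral_dominated_convergence[where w="\<lambda>p. K * indicator S p"])
  show lim': "AE p in lborel. (\<lambda>n. indicator S p *\<^sub>R F n p) \<longlonglongrightarrow> indicator S p *\<^sub>R G p"
    using lim by (auto simp: indicator_def)
  show F': "(\<lambda>p. indicator S p *\<^sub>R F n p) \<in> borel_measurable lborel" for n
    using F by (simp add: set_borel_measurable_def)
  show "(\<lambda>p. indicator S p *\<^sub>R G p) \<in> borel_measurable lborel"
    by (rule borel_measurable_LIMSEQ_real[where u="\<lambda>n p. indicator S p *\<^sub>R F n p", OF _ F'])
      (use lim in \<open>auto simp: indicator_def\<close>)
  show "integrable lborel (\<lambda>p. K * indicator S p)"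
    using S by simp
  show "AE p in lborel. norm (indicator S p *\<^sub>R F n p) \<le> K * indicator S p" for n
    using bound[of n] by eventually_elim (auto simp: indicator_def)
qed

definition boundedly_convergent :: "(nat \<Rightarrow> real \<Rightarrow> real) \<Rightarrow> (real \<Rightarrow> real) \<Rightarrow> bool" where
  "boundedly_convergent E g \<longleftrightarrow> (\<forall>n. E n \<in> borel_measurable borel) \<and>
     (\<forall>c. bounded (\<Union>n. E n ` {-c..c})) \<and> (\<forall>v. (\<lambda>n. E n v) \<longlonglongrightarrow> g v)"

lemma boundedly_convergentD:
  assumes "boundedly_convergent E g"
  shows "E n \<in> borel_measurable borel" "bounded (E n ` {-c..c})"
    and "g \<in> borel_measurable borel" "bounded (g ` {-c..c})"
proof -
  have E: "\<And>n. E n \<in> borel_measurable borel" "\<And>c. bounded (\<Union>n. E n ` {-c..c})"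
    and lim: "\<And>v. (\<lambda>n. E n v) \<longlonglongrightarrow> g v"
    using assms by (auto simp: boundedly_convergent_def)
  show "E n \<in> borel_measurable borel" by (fact E(1))
  show "bounded (E n ` {-c..c})" using E(2) by (rule bounded_subset) auto
  show "g \<in> borel_measurable borel" by (rule borel_measurable_LIMSEQ_real[OF lim E(1)])
  show "bounded (g ` {-c..c})" by (rule bounded_limit_image[OF E(2) lim])
qed

lemma set_integral_compose_tendsto:
  fixes u \<psi> :: "'a::euclidean_space \<Rightarrow> real"
  assumes S: "S \<in> sets lborel" "emeasure lborel S < \<infinity>"
    and u: "Linf_on S u" and \<psi>: "Linf_on S \<psi>" and E: "boundedly_convergent E g"
  shows "(\<lambda>n. LINT p:S|lborel. E n (u p) * \<psi> p) \<longlonglongrightarrow> (LINT p:S|lborel. g (u p) * \<psi> p)"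
proof -
  obtain c c\<psi> where u_bound: "AE p in lborel. p \<in> S \<longrightarrow> \<bar>u p\<bar> \<le> c"
    and \<psi>_bound: "AE p in lborel. p \<in> S \<longrightarrow> \<bar>\<psi> p\<bar> \<le> c\<psi>"
    using u \<psi> unfolding Linf_on_def by blast
  have "bounded (\<Union>n. E n ` {-c..c})"
    using E by (simp add: boundedly_convergent_def)
  then obtain K where "\<forall>y\<in>(\<Union>n. E n ` {-c..c}). \<bar>y\<bar> \<le> K"
    unfolding bounded_iff real_norm_def by blast
  then have K: "\<And>n v. v \<in> {-c..c} \<Longrightarrow> \<bar>E n v\<bar> \<le> K"
    by blast
  show ?thesis
  proof (rule set_integral_bounded_convergence[OF S])
    show "set_borel_measurable lborel S (\<lambda>p. E n (u p) * \<psi> p)" for n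
      using Linf_on_mult[OF Linf_on_compose[OF u S(1) boundedly_convergentD(1,2)[OF E]] \<psi>]
      by (simp add: Linf_on_def)
    show "(\<lambda>n. E n (u p) * \<psi> p) \<longlonglongrightarrow> g (u p) * \<psi> p" for p
      using E by (intro tendsto_mult_right) (simp add: boundedly_convergent_def)
    show "AE p in lborel. p \<in> S \<longrightarrow> \<bar>E n (u p) * \<psi> p\<bar> \<le> K * c\<psi>" for n
      using u_bound \<psi>_bound
      by eventually_elim (auto simp: abs_mult abs_le_iff intro!: mult_mono' K)
  qed
qed

lemma emeasure_lborel_Times3:
  fixes A B C :: "real set"
  assumes "A \<in> sets borel" "B \<in> sets borel" "C \<in> sets borel"
  shows "emeasure lborel (A \<times> B \<times> C) = emeasure lborel A * emeasure lborel B * emeasure lborel C"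
proof -
  have lborel3: "(lborel :: (real \<times> real \<times> real) measure) = lborel \<Otimes>\<^sub>M lborel"
    and lborel2: "(lborel :: (real \<times> real) measure) = lborel \<Otimes>\<^sub>M lborel"
    by (simp_all add: lborel_prod)
  have "emeasure (lborel :: (real \<times> real \<times> real) measure) (A \<times> B \<times> C)
      = emeasure lborel A * emeasure (lborel :: (real \<times> real) measure) (B \<times> C)"
    unfolding lborel3 using assms by (intro lborel.emeasure_pair_measure_Times) (auto simp: lborel2)
  also have "emeasure (lborel :: (real \<times> real) measure) (B \<times> C) = emeasure lborel B * emeasure lborel C"
    unfolding lborel2 using assms by (intro lborel.emeasure_pair_measure_Times) auto
  finally show ?thesis by (simp add: mult.assoc)
qed

text \<open>The nested integrals of the entropy inequality are taken in the order \<open>t, x, \<alpha>\<close>,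
  whereas \<open>\<mu>\<close> is given as a function on \<open>\<Omega> \<times> ]0,T[ \<times> ]0,1[\<close>.\<close>

definition swap12 :: "real \<times> real \<times> real \<Rightarrow> real \<times> real \<times> real" where
  "swap12 p = (fst (snd p), fst p, snd (snd p))"

lemma swap12_measurable [measurable]: "swap12 \<in> borel_measurable borel"
  unfolding swap12_def by (intro borel_measurable_continuous_onI continuous_intros)

lemma distr_lborel_swap12: "distr lborel lborel swap12 = lborel"
proof (rule lborel_eqI[symmetric])
  fix l u :: "real \<times> real \<times> real"
  assume le: "\<And>b. b \<in> Basis \<Longrightarrow> l \<bullet> b \<le> u \<bullet> b"
  obtain l1 l2 l3 u1 u2 u3 where lu: "l = (l1, l2, l3)" "u = (u1, u2, u3)"
    by (cases l, cases u) auto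
  have box: "box l u = {l1<..<u1} \<times> {l2<..<u2} \<times> {l3<..<u3}"
    by (auto simp: lu box_def Basis_prod_def inner_prod_def)
  have "emeasure (distr lborel lborel swap12) (box l u) = emeasure lborel (swap12 -` box l u)"
    by (subst emeasure_distr) auto
  also have "swap12 -` box l u = {l2<..<u2} \<times> {l1<..<u1} \<times> {l3<..<u3}"
    by (auto simp: box swap12_def)
  also have "emeasure lborel \<dots> = emeasure lborel (box l u)"
    unfolding box by (simp add: emeasure_lborel_Times3 mult_ac)
  also have "\<dots> = (\<Prod>b\<in>Basis. (u - l) \<bullet> b)"
    using le by (rule emeasure_lborel_box)
  finally show "emeasure (distr lborel lborel swap12) (box l u) = (\<Prod>b\<in>Basis. (u - l) \<bullet> b)" .
qed simp

lemma lborel_integral_eq_iterated3: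
  fixes h :: "real \<times> real \<times> real \<Rightarrow> real"
  assumes "integrable lborel h"
  shows "integral\<^sup>L lborel h = (\<integral>t. (\<integral>x. (\<integral>a. h (t, x, a) \<partial>lborel) \<partial>lborel) \<partial>lborel)"
proof -
  have h_int: "integrable (lborel \<Otimes>\<^sub>M lborel) h"
    using assms by (simp only: lborel_prod)
  have h_meas: "h \<in> borel_measurable (lborel \<Otimes>\<^sub>M (lborel \<Otimes>\<^sub>M lborel))"
    using borel_measurable_integrable[OF assms] by (simp add: lborel_prod)
  have "integral\<^sup>L lborel h = (\<integral>t. (\<integral>y. h (t, y) \<partial>lborel) \<partial>lborel)"
    using lborel_pair.integral_fst'[OF h_int] by (simp only: lborel_prod)
  also have "\<dots> = (\<integral>t. (\<integral>x. (\<integral>a. h (t, x, a) \<partial>lborel) \<partial>lborel) \<partial>lborel)"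
  proof (rule integral_cong_AE)
    show "(\<lambda>t. \<integral>y. h (t, y) \<partial>lborel) \<in> borel_measurable lborel"
      using h_meas by (simp add: lborel_prod[symmetric]) measurable
    show "(\<lambda>t. \<integral>x. (\<integral>a. h (t, x, a) \<partial>lborel) \<partial>lborel) \<in> borel_measurable lborel"
      using h_meas by measurable
    show "AE t in lborel. (\<integral>y. h (t, y) \<partial>lborel) = (\<integral>x. (\<integral>a. h (t, x, a) \<partial>lborel) \<partial>lborel)"
      using lborel_pair.AE_integrable_fst'[OF h_int]
    proof eventually_elim
      case (elim t)
      then have "integrable (lborel \<Otimes>\<^sub>M lborel) (\<lambda>y. h (t, y))"
        by (simp only: lborel_prod)
      from lborel_pair.integral_fst'[OF this] show ?case
        by (simp only: lborel_prod)
    qed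
  qed
  finally show ?thesis .
qed

lemma nested_set_integral_eq:
  fixes G :: "real \<Rightarrow> real \<Rightarrow> real \<Rightarrow> real"
  assumes int: "set_integrable lborel (X \<times> T \<times> A) (\<lambda>p. G (fst p) (fst (snd p)) (snd (snd p)))"
  shows "(LINT t:T|lborel. LINT x:X|lborel. LINT a:A|lborel. G x t a)
       = (LINT p:X \<times> T \<times> A|lborel. G (fst p) (fst (snd p)) (snd (snd p)))"
proof -
  let ?F = "\<lambda>p. indicator (X \<times> T \<times> A) p *\<^sub>R G (fst p) (fst (snd p)) (snd (snd p))"
  define h :: "real \<times> real \<times> real \<Rightarrow> real" where
    "h q = indicator T (fst q) * (indicator X (fst (snd q)) *
       (indicator A (snd (snd q)) * G (fst (snd q)) (fst q) (snd (snd q))))" for q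
  have F_h: "?F = (\<lambda>p. h (swap12 p))" and h_F: "h = (\<lambda>q. ?F (swap12 q))"
    by (auto simp: h_def swap12_def indicator_def)
  have "?F \<in> borel_measurable lborel"
    using int by (simp add: set_integrable_def borel_measurable_integrable)
  then have h_meas: "h \<in> borel_measurable lborel"
    unfolding h_F by measurable
  have "integrable lborel (\<lambda>p. h (swap12 p))"
    using int unfolding set_integrable_def F_h .
  then have "integrable (distr lborel lborel swap12) h"
    using h_meas by (subst integrable_distr_eq) auto
  then have h_int: "integrable lborel h"
    by (simp add: distr_lborel_swap12)
  have "(LINT p:X \<times> T \<times> A|lborel. G (fst p) (fst (snd p)) (snd (snd p))) = integral\<^sup>L lborel h"
    unfolding set_lebesgue_integral_def F_h
    using integral_distr[of swap12 lborel lborel h] h_meas by (simp add: distr_lborel_swap12)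
  also have "\<dots> = (\<integral>t. (\<integral>x. (\<integral>a. h (t, x, a) \<partial>lborel) \<partial>lborel) \<partial>lborel)"
    by (rule lborel_integral_eq_iterated3[OF h_int])
  also have "\<dots> = (LINT t:T|lborel. LINT x:X|lborel. LINT a:A|lborel. G x t a)"
    by (simp add: set_lebesgue_integral_def h_def)
  finally show ?thesis ..
qed

section \<open>Passing to the limit in the entropy inequalities\<close>

lemma boundedly_convergent_eta_approx: "boundedly_convergent (eta_approx pm k) (eta_k pm k)"
  unfolding boundedly_convergent_def
proof (intro conjI allI)
  show "eta_approx pm k n \<in> borel_measurable borel" for n
    using DERIV_eta_approx by (intro borel_measurable_continuous_onI DERIV_continuous_on) blast
  show "bounded (\<Union>n. eta_approx pm k n ` {-c..c})" for c
  proof -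
    have "\<bar>eta_approx pm k n v\<bar> \<le> \<bar>c\<bar> + \<bar>k\<bar>" if "v \<in> {-c..c}" for n v
      using abs_eta_approx_le[of pm k n v] that by auto
    then show ?thesis
      unfolding bounded_iff by (intro exI[of _ "\<bar>c\<bar> + \<bar>k\<bar>"]) auto
  qed
  show "(\<lambda>n. eta_approx pm k n v) \<longlonglongrightarrow> eta_k pm k v" for v
    by (rule eta_approx_tendsto)
qed

lemma boundedly_convergent_eta_approx_deriv:
  "boundedly_convergent (eta_approx_deriv pm k) (\<lambda>s. sign_pm pm (s - k))"
  unfolding boundedly_convergent_def
proof (intro conjI allI)
  show "eta_approx_deriv pm k n \<in> borel_measurable borel" for n
    by (intro borel_measurable_continuous_onI continuous_on_eta_approx_deriv)
  show "bounded (\<Union>n. eta_approx_deriv pm k n ` {-c..c})" for c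
    unfolding bounded_iff using abs_eta_approx_deriv_le by (intro exI[of _ 1]) auto
  show "(\<lambda>n. eta_approx_deriv pm k n v) \<longlonglongrightarrow> sign_pm pm (v - k)" for v
    by (rule eta_approx_deriv_tendsto)
qed

lemma boundedly_convergent_q_approx:
  assumes f: "C1_fun f"
  shows "boundedly_convergent (q_approx f pm k) (q_k f pm k)"
  unfolding boundedly_convergent_def
proof (intro conjI allI)
  show "q_approx f pm k n \<in> borel_measurable borel" for n
    using DERIV_q_approx[OF f] by (intro borel_measurable_continuous_onI DERIV_continuous_on) blast
  show "bounded (\<Union>n. q_approx f pm k n ` {-c..c})" for c
  proof -
    define R where "R = \<bar>c\<bar> + \<bar>k\<bar>"
    have "bounded (deriv f ` {-R..R})"
      using f by (intro compact_imp_bounded compact_continuous_image)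
        (auto simp: C1_fun_def intro: continuous_on_subset)
    then obtain M where M: "\<forall>r\<in>{-R..R}. \<bar>deriv f r\<bar> \<le> M"
      unfolding bounded_iff by (auto simp del: atLeastAtMost_iff)
    have "\<bar>q_approx f pm k n v\<bar> \<le> \<bar>M\<bar> * R" if "v \<in> {-c..c}" for n v
    proof -
      have "closed_segment k v \<subseteq> {-R..R}"
        using that by (auto simp: R_def closed_segment_eq_real_ivl split: if_splits)
      then have "\<bar>q_approx f pm k n v\<bar> \<le> M * \<bar>v - k\<bar>"
        using M by (intro abs_q_approx_le[OF f]) auto
      also have "\<dots> \<le> \<bar>M\<bar> * R"
        using that by (intro mult_mono) (auto simp: R_def)
      finally show ?thesis .
    qed
    then show ?thesis
      unfolding bounded_iff by (intro exI[of _ "\<bar>M\<bar> * R"]) auto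
  qed
  show "(\<lambda>n. q_approx f pm k n v) \<longlonglongrightarrow> q_k f pm k v" for v
    by (rule q_approx_tendsto[OF f])
qed

lemma Ioo_Times3:
  fixes a b c d e g :: real
  shows "{a<..<b} \<times> {c<..<d} \<times> {e<..<g} \<in> sets lborel"
    and "bounded ({a<..<b} \<times> {c<..<d} \<times> {e<..<g})"
    and "emeasure lborel ({a<..<b} \<times> {c<..<d} \<times> {e<..<g}) < \<infinity>"
proof -
  show bounded: "bounded ({a<..<b} \<times> {c<..<d} \<times> {e<..<g})"
    by (intro bounded_Times) auto
  show "emeasure lborel ({a<..<b} \<times> {c<..<d} \<times> {e<..<g}) < \<infinity>"
    by (rule emeasure_bounded_finite[OF bounded])
qed (simp add: open_Times)

lemma Linf_on_continuous_fst_snd: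
  fixes g :: "real \<Rightarrow> real \<Rightarrow> real"
  assumes g: "continuous_on UNIV (\<lambda>q. g (fst q) (snd q))" and S: "bounded S" "S \<in> sets lborel"
  shows "Linf_on S (\<lambda>p::real \<times> real \<times> real. g (fst p) (fst (snd p)))"
proof (rule Linf_on_continuous[OF _ S])
  have "continuous_on UNIV (\<lambda>p::real \<times> real \<times> real. (fst p, fst (snd p)))"
    by (intro continuous_intros)
  from continuous_on_compose2[OF g this]
  show "continuous_on UNIV (\<lambda>p::real \<times> real \<times> real. g (fst p) (fst (snd p)))" by simp
qed

context
  fixes xl xr T :: real and \<mu> :: "real \<Rightarrow> real \<Rightarrow> real \<Rightarrow> real" and dz b :: "real \<Rightarrow> real"
    and \<phi> :: "real \<Rightarrow> real \<Rightarrow> real"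
  assumes \<mu>: "Linf_on ({xl<..<xr} \<times> {0<..<T} \<times> {0<..<1}) (\<lambda>p. \<mu> (fst p) (fst (snd p)) (snd (snd p)))"
    and dz: "Linf_on {xl<..<xr} dz" and b: "continuous_on UNIV b"
    and \<phi>: "continuous_on UNIV (\<lambda>q. \<phi> (fst q) (snd q))"
begin

lemma Linf_on_compose_solution:
  assumes "F \<in> borel_measurable borel" "\<And>c. bounded (F ` {-c..c})"
    and "Linf_on ({xl<..<xr} \<times> {0<..<T} \<times> {0<..<1}) \<Psi>"
  shows "Linf_on ({xl<..<xr} \<times> {0<..<T} \<times> {0<..<1})
    (\<lambda>p. F (\<mu> (fst p) (fst (snd p)) (snd (snd p))) * \<Psi> p)"
  using Linf_on_mult[OF Linf_on_compose[OF \<mu> Ioo_Times3(1) assms(1,2)] assms(3)] .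

lemma Linf_on_source_factor:
  "Linf_on ({xl<..<xr} \<times> {0<..<T} \<times> {0<..<1})
    (\<lambda>p. dz (fst p) * b (\<mu> (fst p) (fst (snd p)) (snd (snd p))) * \<phi> (fst p) (fst (snd p)))"
proof (intro Linf_on_mult Linf_on_compose[OF \<mu> Ioo_Times3(1)] borel_measurable_continuous_onI b
    Linf_on_continuous_fst_snd[OF \<phi> Ioo_Times3(2,1)])
  show "Linf_on ({xl<..<xr} \<times> {0<..<T} \<times> {0<..<1::real}) (\<lambda>p. dz (fst p))"
    by (intro Linf_on_Times_fst dz) (simp add: open_Times)
  show "bounded (b ` {-c..c})" for c
    using b by (intro compact_imp_bounded compact_continuous_image) (auto intro: continuous_on_subset)
qed

lemma interior_integral_eq:
  fixes \<psi>t \<psi>x :: "real \<Rightarrow> real \<Rightarrow> real" and E Q E' :: "real \<Rightarrow> real"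
  assumes \<psi>: "continuous_on UNIV (\<lambda>q. \<psi>t (fst q) (snd q))" "continuous_on UNIV (\<lambda>q. \<psi>x (fst q) (snd q))"
    and E: "E \<in> borel_measurable borel" "\<And>c. bounded (E ` {-c..c})"
    and Q: "Q \<in> borel_measurable borel" "\<And>c. bounded (Q ` {-c..c})"
    and E': "E' \<in> borel_measurable borel" "\<And>c. bounded (E' ` {-c..c})"
  defines "S \<equiv> {xl<..<xr} \<times> {0<..<T} \<times> {0<..<1::real}"
    and "u \<equiv> \<lambda>p. \<mu> (fst p) (fst (snd p)) (snd (snd p))"
  defines "I \<equiv> (LINT p:S|lborel. E (u p) * \<psi>t (fst p) (fst (snd p)))
      + (LINT p:S|lborel. Q (u p) * \<psi>x (fst p) (fst (snd p)))
      - (LINT p:S|lborel. E' (u p) * (dz (fst p) * b (u p) * \<phi> (fst p) (fst (snd p))))"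
  shows "(LINT t:{0<..<T}|lborel. LINT x:{xl<..<xr}|lborel. LINT \<alpha>:{0<..<1}|lborel.
            E (\<mu> x t \<alpha>) * \<psi>t x t + Q (\<mu> x t \<alpha>) * \<psi>x x t - E' (\<mu> x t \<alpha>) * dz x * b (\<mu> x t \<alpha>) * \<phi> x t)
      = I"
    and "(LINT t:{0<..<T}|lborel. LINT x:{xl<..<xr}|lborel. LINT \<alpha>:{0<..<1}|lborel.
            E (\<mu> x t \<alpha>) * \<psi>t x t + Q (\<mu> x t \<alpha>) * \<psi>x x t)
        - (LINT t:{0<..<T}|lborel. LINT x:{xl<..<xr}|lborel. LINT \<alpha>:{0<..<1}|lborel.
            E' (\<mu> x t \<alpha>) * dz x * b (\<mu> x t \<alpha>) * \<phi> x t)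
      = I"
proof -
  have L: "Linf_on S (\<lambda>p. E (u p) * \<psi>t (fst p) (fst (snd p)))"
    "Linf_on S (\<lambda>p. Q (u p) * \<psi>x (fst p) (fst (snd p)))"
    "Linf_on S (\<lambda>p. E' (u p) * (dz (fst p) * b (u p) * \<phi> (fst p) (fst (snd p))))"
    unfolding S_def u_def
    using Linf_on_compose_solution[OF E Linf_on_continuous_fst_snd[OF \<psi>(1) Ioo_Times3(2,1)]]
      Linf_on_compose_solution[OF Q Linf_on_continuous_fst_snd[OF \<psi>(2) Ioo_Times3(2,1)]]
      Linf_on_compose_solution[OF E' Linf_on_source_factor]
    by simp_all
  have integrable: "set_integrable lborel S g" if "Linf_on S g" for g
    using that Ioo_Times3(1,3) unfolding S_def by (rule set_integrable_Linf_on)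
  have nested: "(LINT t:{0<..<T}|lborel. LINT x:{xl<..<xr}|lborel. LINT \<alpha>:{0<..<1}|lborel. G x t \<alpha>)
      = (LINT p:S|lborel. G (fst p) (fst (snd p)) (snd (snd p)))"
    if "Linf_on S (\<lambda>p. G (fst p) (fst (snd p)) (snd (snd p)))" for G
    using nested_set_integral_eq[OF integrable[OF that, unfolded S_def]] by (simp add: S_def)
  show "(LINT t:{0<..<T}|lborel. LINT x:{xl<..<xr}|lborel. LINT \<alpha>:{0<..<1}|lborel.
            E (\<mu> x t \<alpha>) * \<psi>t x t + Q (\<mu> x t \<alpha>) * \<psi>x x t - E' (\<mu> x t \<alpha>) * dz x * b (\<mu> x t \<alpha>) * \<phi> x t)
      = I"
    using nested Linf_on_diff[OF Linf_on_add[OF L(1,2)] L(3)] L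
    by (simp add: I_def u_def mult.assoc integrable set_integral_add set_integral_diff)
  show "(LINT t:{0<..<T}|lborel. LINT x:{xl<..<xr}|lborel. LINT \<alpha>:{0<..<1}|lborel.
            E (\<mu> x t \<alpha>) * \<psi>t x t + Q (\<mu> x t \<alpha>) * \<psi>x x t)
        - (LINT t:{0<..<T}|lborel. LINT x:{xl<..<xr}|lborel. LINT \<alpha>:{0<..<1}|lborel.
            E' (\<mu> x t \<alpha>) * dz x * b (\<mu> x t \<alpha>) * \<phi> x t)
      = I"
    using nested Linf_on_add[OF L(1,2)] L
    by (simp add: I_def u_def mult.assoc integrable set_integral_add)
qed

lemma interior_term_tendsto:
  fixes \<psi>t \<psi>x :: "real \<Rightarrow> real \<Rightarrow> real" and e q s :: "real \<Rightarrow> real" and E Q E' :: "nat \<Rightarrow> real \<Rightarrow> real"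
  assumes \<psi>: "continuous_on UNIV (\<lambda>q. \<psi>t (fst q) (snd q))" "continuous_on UNIV (\<lambda>q. \<psi>x (fst q) (snd q))"
    and conv: "boundedly_convergent E e" "boundedly_convergent Q q" "boundedly_convergent E' s"
  shows "(\<lambda>n. LINT t:{0<..<T}|lborel. LINT x:{xl<..<xr}|lborel. LINT \<alpha>:{0<..<1}|lborel.
            E n (\<mu> x t \<alpha>) * \<psi>t x t + Q n (\<mu> x t \<alpha>) * \<psi>x x t
            - E' n (\<mu> x t \<alpha>) * dz x * b (\<mu> x t \<alpha>) * \<phi> x t)
      \<longlonglongrightarrow> (LINT t:{0<..<T}|lborel. LINT x:{xl<..<xr}|lborel. LINT \<alpha>:{0<..<1}|lborel.
            e (\<mu> x t \<alpha>) * \<psi>t x t + q (\<mu> x t \<alpha>) * \<psi>x x t)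
        - (LINT t:{0<..<T}|lborel. LINT x:{xl<..<xr}|lborel. LINT \<alpha>:{0<..<1}|lborel.
            s (\<mu> x t \<alpha>) * dz x * b (\<mu> x t \<alpha>) * \<phi> x t)"
proof -
  note E = boundedly_convergentD[OF conv(1)] and Q = boundedly_convergentD[OF conv(2)]
    and E' = boundedly_convergentD[OF conv(3)]
  show ?thesis
    unfolding interior_integral_eq(1)[OF \<psi> E(1,2) Q(1,2) E'(1,2)]
      interior_integral_eq(2)[OF \<psi> E(3,4) Q(3,4) E'(3,4)]
    by (intro tendsto_add tendsto_diff set_integral_compose_tendsto[OF Ioo_Times3(1,3) \<mu>] conv
        Linf_on_continuous_fst_snd[OF _ Ioo_Times3(2,1)] \<psi> Linf_on_source_factor)
qed

end

lemma boundary_term_tendsto: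
  fixes u1 u2 \<psi>1 \<psi>2 :: "real \<Rightarrow> real"
  assumes A: "A \<in> sets lborel" "bounded A"
    and L: "Linf_on A u1" "Linf_on A u2" "Linf_on A \<psi>1" "Linf_on A \<psi>2"
    and E: "boundedly_convergent E g"
  shows "(\<lambda>n. LINT t:A|lborel. E n (u1 t) * \<psi>1 t + E n (u2 t) * \<psi>2 t)
      \<longlonglongrightarrow> (LINT t:A|lborel. g (u1 t) * \<psi>1 t + g (u2 t) * \<psi>2 t)"
proof -
  have A_fin: "emeasure lborel A < \<infinity>"
    using A(2) by (rule emeasure_bounded_finite)
  have int: "set_integrable lborel A (\<lambda>t. F (u t) * \<psi> t)"
    if "F \<in> borel_measurable borel" "\<And>c. bounded (F ` {-c..c})" "Linf_on A u" "Linf_on A \<psi>" for F u \<psi>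
    using set_integrable_Linf_on[OF Linf_on_mult[OF Linf_on_compose[OF that(3) A(1) that(1,2)] that(4)]]
      A A_fin by blast
  have split: "(LINT t:A|lborel. F (u1 t) * \<psi>1 t + F (u2 t) * \<psi>2 t)
      = (LINT t:A|lborel. F (u1 t) * \<psi>1 t) + (LINT t:A|lborel. F (u2 t) * \<psi>2 t)"
    if "F \<in> borel_measurable borel" "\<And>c. bounded (F ` {-c..c})" for F
    using int[OF that L(1,3)] int[OF that L(2,4)] by (rule set_integral_add)
  show ?thesis
    unfolding split[OF boundedly_convergentD(1,2)[OF E]] split[OF boundedly_convergentD(3,4)[OF E]]
    by (intro tendsto_add set_integral_compose_tendsto[OF A(1) A_fin _ _ E] L)
qed

lemma continuous_on_slices:
  assumes "continuous_on UNIV (\<lambda>p. g (fst p) (snd p))"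
  shows "continuous_on UNIV (\<lambda>x. g x t)" and "continuous_on UNIV (\<lambda>t. g x t)"
proof -
  have "continuous_on UNIV (\<lambda>x. (x, t))" "continuous_on UNIV (\<lambda>s. (x, s))"
    by (auto intro!: continuous_intros)
  from continuous_on_compose2[OF assms this(1)] continuous_on_compose2[OF assms this(2)]
  show "continuous_on UNIV (\<lambda>x. g x t)" "continuous_on UNIV (\<lambda>t. g x t)"
    by simp_all
qed

theorem mainTheorem3:
  fixes xl xr T :: real
    and u0 ul ur f z dz b :: "real \<Rightarrow> real"
    and \<mu> :: "real \<Rightarrow> real \<Rightarrow> real \<Rightarrow> real"
    and k :: real and pm :: bool
    and \<phi> :: "real \<Rightarrow> real \<Rightarrow> real"
  assumes "xl < xr" and "T > 0"
    and "Linf_on {xl<..<xr} u0" and "Linf_on {0<..<T} ul" and "Linf_on {0<..<T} ur"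
    and "C2_fun f"
    and "W1inf_with_deriv xl xr z dz"
    and "C1_fun b" and "bounded (range (deriv b))"
    and "C1_fun (D_fun f b)"
    and "surj (D_fun f b)"
    and "\<exists>c>0. \<forall>s. c \<le> deriv (D_fun f b) s"
    and "entropy_process_solution xl xr T u0 ul ur f dz b \<mu>"
    and "test_fun xl xr T \<phi>"
  shows "let C = Linf_norm ({xl<..<xr} \<times> {0<..<T} \<times> {0<..<1})
                   (\<lambda>p. \<mu> (fst p) (fst (snd p)) (snd (snd p)))
         in (LINT t:{0<..<T}|lborel. LINT x:{xl<..<xr}|lborel. LINT \<alpha>:{0<..<1}|lborel.
                eta_k pm k (\<mu> x t \<alpha>) * dt \<phi> x t + q_k f pm k (\<mu> x t \<alpha>) * dx \<phi> x t)
          - (LINT t:{0<..<T}|lborel. LINT x:{xl<..<xr}|lborel. LINT \<alpha>:{0<..<1}|lborel.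
                sign_pm pm (\<mu> x t \<alpha> - k) * dz x * b (\<mu> x t \<alpha>) * \<phi> x t)
          + (LINT x:{xl<..<xr}|lborel. eta_k pm k (u0 x) * \<phi> x 0)
          + Lip_on C f * (LINT t:{0<..<T}|lborel.
                eta_k pm k (ur t) * \<phi> xr t + eta_k pm k (ul t) * \<phi> xl t)
          \<ge> 0"
proof -
  have f: "C1_fun f"
    using assms(6) by (rule C2_fun_imp_C1_fun)
  have \<mu>: "Linf_on ({xl<..<xr} \<times> {0<..<T} \<times> {0<..<1}) (\<lambda>p. \<mu> (fst p) (fst (snd p)) (snd (snd p)))"
    using assms(13) by (simp add: entropy_process_solution_def)
  have dz: "Linf_on {xl<..<xr} dz"
    using assms(7) by (simp add: W1inf_with_deriv_def)
  have b: "continuous_on UNIV b"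
    using assms(8) unfolding C1_fun_def
    by (intro differentiable_imp_continuous_on differentiable_at_imp_differentiable_on) auto
  have \<phi>: "continuous_on UNIV (\<lambda>p. pderivs ds \<phi> (fst p) (snd p))" for ds
    using assms(14) by (simp add: test_fun_def smooth2_def)
  have interval: "{a<..<c} \<in> sets lborel" "bounded {a<..<c}" for a c :: real
    by simp_all
  have interval_finite: "emeasure lborel {a<..<c} < \<infinity>" for a c :: real
    by (rule emeasure_bounded_finite) simp
  have traces: "Linf_on {xl<..<xr} (\<lambda>x. \<phi> x 0)" "Linf_on {0<..<T} (\<lambda>t. \<phi> xr t)"
    "Linf_on {0<..<T} (\<lambda>t. \<phi> xl t)"
    using continuous_on_slices[OF \<phi>[of "[]"]] interval by (auto intro!: Linf_on_continuous)
  note interior = interior_term_tendsto[OF \<mu> dz b \<phi>[of "[]", simplified] \<phi>[of "[False]", simplified]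
      \<phi>[of "[True]", simplified] boundedly_convergent_eta_approx boundedly_convergent_q_approx[OF f]
      boundedly_convergent_eta_approx_deriv]
  note initial = set_integral_compose_tendsto[OF interval(1) interval_finite assms(3) traces(1)
      boundedly_convergent_eta_approx]
  note boundary = boundary_term_tendsto[OF interval assms(5,4) traces(2,3) boundedly_convergent_eta_approx]
  note entropy_inequality = assms(13)[unfolded entropy_process_solution_def Let_def, THEN conjunct2,
      rule_format, OF conjI[OF boundary_entropy_pair_approx[OF f] assms(14)], unfolded deriv_eta_approx]
  show ?thesis
    unfolding Let_def
    by (rule LIMSEQ_le_const[OF tendsto_add[OF tendsto_add[OF interior initial]
          tendsto_mult_left[OF boundary]]])
      (use entropy_inequality in blast)
qed

end
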